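(* Let $\Phi:\mathcal H\to\mathrm{End}_{\mathbb K}(V^{\otimes n})$ be the representation with $\Phi(g_a)=T_a$ ($0\le a\le n-1$) and let $\Psi^{\otimes n}:U_q(\mathfrak g)\to\mathrm{End}_{\mathbb K}(V^{\otimes n})$ be the tensor-power vector representation, both as in the context. Then for all $X\in\mathcal H$ and $Y\in U_q(\mathfrak g)$, $$\Phi(X)\Psi^{\otimes n}(Y)=\Psi^{\otimes n}(Y)\Phi(X).$$
   Context: Let $m,n\ge 1$, $\mathbb K=\mathbb C(q,Q_1,\dots,Q_m)$ (indeterminates). Cyclotomic Hecke algebra $\mathcal H$: the unital $\mathbb K$-algebra generated by $g_0,\dots,g_{n-1}$ with relations $(g_0-Q_1)\cdots(g_0-Q_m)=0$, $g_0g_1g_0g_1=g_1g_0g_1g_0$, $g_i^2=(q-q^{-1})g_i+1$ ($1\le i\le n-1$), $g_ig_j=g_jg_i$ ($|i-j|\ge2$), $g_ig_{i+1}g_i=g_{i+1}g_ig_{i+1}$ ($1\le i\le n-2$). Superspace and Hecke action: fix nonnegative integers $k_1,\dots,k_m,\ell_1,\dots,\ell_m$, $N=\sum_c(k_c+\ell_c)>0$, $d_c=\sum_{j\le c}(k_j+\ell_j)$. $V$ is a $\mathbb K$-superspace with homogeneous basis $\{v^{(c)}_a:1\le c\le m,1\le a\le k_c+\ell_c\}$, $v^{(c)}_a$ even iff $a\le k_c$, of colour $c$; ordered by $v^{(c)}_a<v^{(c')}_b$ iff $c<c'$ or ($c=c'$, $a<b$), and written $u_1<\cdots<u_N$ (so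 colour $c$ occupies positions $d_{c-1}+1,\dots,d_c$, $d_0=0$). $\bar j$ is the parity of $u_j$, $\mathrm{col}(j)$ its colour. For $\mathbf i=(i_1,\dots,i_n)\in\{1,\dots,N\}^n$, $\mathbf i$ also denotes $u_{i_1}\otimes\cdots\otimes u_{i_n}$, $c_t(\mathbf i)=\mathrm{col}(i_t)$, and $\mathbf i s_a$ is $\mathbf i$ with entries $a,a+1$ swapped. Operators: $s_a(\mathbf i)=(-1)^{\bar i_a}\mathbf i$ if $i_a=i_{a+1}$, else $(-1)^{\bar i_a\bar i_{a+1}}\mathbf i s_a$; $T_a(\mathbf i)=(q-q^{-1})\mathbf i+(-1)^{\bar i_a\bar i_{a+1}}\mathbf i s_a$ if $i_a<i_{a+1}$, $=\frac{(q-q^{-1})+(-1)^{\bar i_a}(q+q^{-1})}{2}\mathbf i$ if $i_a=i_{a+1}$, $=(-1)^{\bar i_a\bar i_{a+1}}\mathbf i s_a$ if $i_a>i_{a+1}$; $S_a(\mathbf i)=T_a(\mathbf i)$ if $c_a(\mathbf i)=c_{a+1}(\mathbf i)$, else $s_a(\mathbf i)$; $S_0(\mathbf i)=Q_{c_1(\mathbf i)}\mathbf i$; $\theta=S_{n-1}\cdots S_1$; $T_0=T_1^{-1}\cdots T_{n-1}^{-1}\theta S_0$. The assignment $g_a\mapsto T_a$ extends to a representation $\Phi$ of $\mathcal H$. Quantum superalgebra action: $\mathfrak g=\mathfrak{gl}(k_1|\ell_1)\oplus\cdots\oplus\mathfrak{gl}(k_m|\ell_m)\subseteq\mathfrak{gl}(k|\ell)$,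 $k=\sum k_c$, $\ell=\sum\ell_c$, and $U_q(\mathfrak g)$ is its quantized enveloping superalgebra, viewed as the subalgebra of the quantum general linear superalgebra (with respect to the ordered homogeneous basis $u_1,\dots,u_N$) generated by $K_b^{\pm1}$ ($1\le b\le N$) and $E_a,F_a$ for $a\in\{1,\dots,N-1\}\setminus\{d_1,\dots,d_{m-1}\}$; $E_a,F_a$ have parity $\bar a+\overline{a+1}$, $K_b$ are even. Vector representation $\Psi$ on $V$: $E_au_{a+1}=(-1)^{\overline{a+1}}u_a$, $E_au_j=0$ ($j\ne a+1$); $F_au_a=(-1)^{\bar a}u_{a+1}$, $F_au_j=0$ ($j\neq a$); $K_b^{\pm1}u_j=q^{\pm(-1)^{\bar j}\delta_{bj}}u_j$. With $\widetilde K_a=K_aK_{a+1}^{-1}$, the representation $\Psi^{\otimes n}$ on $V^{\otimes n}$ (from the coproduct $\Delta(K_b)=K_b\otimes K_b$, $\Delta(E_a)=E_a\otimes\widetilde K_a+1\otimes E_a$, $\Delta(F_a)=F_a\otimes1+\widetilde K_a^{-1}\otimes F_a$) is given by $\Psi^{\otimes n}(E_a)=\sum_{p=0}^{n-1}\widetilde K_a^{\otimes p}\otimes\Psi(E_a)\otimes\mathrm{Id}^{\otimes(n-1-p)}$, $\Psi^{\otimes n}(F_a)=\sum_{p=0}^{n-1}\mathrm{Id}^{\otimes p}\otimes\Psi(F_a)\otimes(\widetilde K_a^{-1})^{\otimes(n-1-p)}$, $\Psi^{\otimes n}(K_b)=K_b^{\otimes n}$, where tensor products of homogeneous operators act with the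 Koszul sign $(\phi\otimes\psi)(x\otimes y)=(-1)^{\bar x\bar\psi}\phi(x)\otimes\psi(y)$. *)

theory Defs
  imports Complex_Main "HOL-Library.Poly_Mapping" "HOL-Computational_Algebra.Fraction_Field"
begin

section \<open>The ground field K = C(q, Q_1, Q_2, ...)\<close>

type_synonym cpoly = "(nat \<Rightarrow>\<^sub>0 nat) \<Rightarrow>\<^sub>0 complex"
type_synonym KK = "cpoly fract"

definition var :: "nat \<Rightarrow> KK" where
  "var v = Fract (Poly_Mapping.single (Poly_Mapping.single v 1) 1) 1"

definition qK :: KK where "qK = var 0"
definition QK :: "nat \<Rightarrow> KK" where "QK c = var c"

definition dd :: "(nat \<Rightarrow> nat) \<Rightarrow> (nat \<Rightarrow> nat) \<Rightarrow> nat \<Rightarrow> nat" where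
  "dd kk ll c = (\<Sum>j=1..c. kk j + ll j)"

definition col :: "(nat \<Rightarrow> nat) \<Rightarrow> (nat \<Rightarrow> nat) \<Rightarrow> nat \<Rightarrow> nat" where
  "col kk ll j = (LEAST c. j \<le> dd kk ll c)"

definition par :: "(nat \<Rightarrow> nat) \<Rightarrow> (nat \<Rightarrow> nat) \<Rightarrow> nat \<Rightarrow> nat" where
  "par kk ll j = (let c = col kk ll j in if j - dd kk ll (c - 1) \<le> kk c then 0 else 1)"

text \<open>Basis tuples of V^{\<otimes>n}: lists i = (i_1,...,i_n) (0-indexed as Isabelle lists).\<close>
definition Bas :: "nat \<Rightarrow> nat \<Rightarrow> nat list set" where
  "Bas n N = {i. length i = n \<and> set i \<subseteq> {1..N}}"

text \<open>M r c = coefficient of basis vector r in M(basis vector c).\<close>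
type_synonym 'k tmat = "nat list \<Rightarrow> nat list \<Rightarrow> 'k"

definition mmul :: "nat list set \<Rightarrow> 'k::field tmat \<Rightarrow> 'k tmat \<Rightarrow> 'k tmat" where
  "mmul B M M' = (\<lambda>r c. \<Sum>s\<in>B. M r s * M' s c)"

definition idm :: "'k::field tmat" where
  "idm = (\<lambda>r c. if r = c then 1 else 0)"

definition mprod :: "nat list set \<Rightarrow> 'k::field tmat list \<Rightarrow> 'k tmat" where
  "mprod B Ms = foldr (mmul B) Ms idm"

definition from_img :: "(nat list \<Rightarrow> nat list \<Rightarrow> 'k) \<Rightarrow> 'k tmat" where
  "from_img f = (\<lambda>r c. f c r)"

definition unitv :: "nat list \<Rightarrow> nat list \<Rightarrow> 'k::field" where
  "unitv v = (\<lambda>r. if r = v then 1 else 0)"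

inductive_set galg :: "nat list set \<Rightarrow> 'k::field tmat set \<Rightarrow> 'k tmat set" for B G where
  galg_id: "idm \<in> galg B G"
| galg_gen: "M \<in> G \<Longrightarrow> M \<in> galg B G"
| galg_add: "M \<in> galg B G \<Longrightarrow> M' \<in> galg B G \<Longrightarrow> (\<lambda>r c. M r c + M' r c) \<in> galg B G"
| galg_smult: "M \<in> galg B G \<Longrightarrow> (\<lambda>r c. x * M r c) \<in> galg B G"
| galg_mult: "M \<in> galg B G \<Longrightarrow> M' \<in> galg B G \<Longrightarrow> mmul B M M' \<in> galg B G"

text \<open>i s_a: swap entries at positions a, a+1 (1-indexed)\<close>
definition swp :: "nat \<Rightarrow> nat list \<Rightarrow> nat list" where
  "swp a i = i[a - 1 := i ! a, a := i ! (a - 1)]"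

definition Tact :: "'k::field \<Rightarrow> (nat \<Rightarrow> nat) \<Rightarrow> nat \<Rightarrow> nat list \<Rightarrow> nat list \<Rightarrow> 'k" where
  "Tact q p a i = (let x = i ! (a - 1); y = i ! a; sg = (-1) ^ (p x * p y) in
     if x < y then (\<lambda>r. (q - inverse q) * unitv i r + sg * unitv (swp a i) r)
     else if x = y then (\<lambda>r. ((q - inverse q) + (-1) ^ p x * (q + inverse q)) / 2 * unitv i r)
     else (\<lambda>r. sg * unitv (swp a i) r))"

definition sact :: "(nat \<Rightarrow> nat) \<Rightarrow> nat \<Rightarrow> nat list \<Rightarrow> nat list \<Rightarrow> 'k::field" where
  "sact p a i = (let x = i ! (a - 1); y = i ! a in
     if x = y then (\<lambda>r. (-1) ^ p x * unitv i r)
     else (\<lambda>r. (-1) ^ (p x * p y) * unitv (swp a i) r))"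

definition Tm :: "(nat \<Rightarrow> nat) \<Rightarrow> (nat \<Rightarrow> nat) \<Rightarrow> nat \<Rightarrow> KK tmat" where
  "Tm kk ll a = from_img (Tact qK (par kk ll) a)"

definition Sm :: "(nat \<Rightarrow> nat) \<Rightarrow> (nat \<Rightarrow> nat) \<Rightarrow> nat \<Rightarrow> KK tmat" where
  "Sm kk ll a = from_img (\<lambda>i. if col kk ll (i ! (a - 1)) = col kk ll (i ! a)
                                then Tact qK (par kk ll) a i else sact (par kk ll) a i)"

definition S0m :: "(nat \<Rightarrow> nat) \<Rightarrow> (nat \<Rightarrow> nat) \<Rightarrow> KK tmat" where
  "S0m kk ll = from_img (\<lambda>i r. QK (col kk ll (i ! 0)) * unitv i r)"

text \<open>T_a^{-1} = T_a - (q - q^{-1}) Id, the inverse forced by the quadratic relation.\<close>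
definition Tinvm :: "(nat \<Rightarrow> nat) \<Rightarrow> (nat \<Rightarrow> nat) \<Rightarrow> nat \<Rightarrow> KK tmat" where
  "Tinvm kk ll a = (\<lambda>r c. Tm kk ll a r c - (qK - inverse qK) * idm r c)"

definition thetam :: "(nat \<Rightarrow> nat) \<Rightarrow> (nat \<Rightarrow> nat) \<Rightarrow> nat \<Rightarrow> nat \<Rightarrow> KK tmat" where
  "thetam kk ll n N = mprod (Bas n N) (map (Sm kk ll) (rev [1..<n]))"

definition T0m :: "(nat \<Rightarrow> nat) \<Rightarrow> (nat \<Rightarrow> nat) \<Rightarrow> nat \<Rightarrow> nat \<Rightarrow> KK tmat" where
  "T0m kk ll n N = mprod (Bas n N)
     (map (Tinvm kk ll) [1..<n] @ [thetam kk ll n N, S0m kk ll])"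

text \<open>Image of the generators g_0, ..., g_{n-1} of the cyclotomic Hecke algebra under Phi\<close>
definition HeckeGens :: "(nat \<Rightarrow> nat) \<Rightarrow> (nat \<Rightarrow> nat) \<Rightarrow> nat \<Rightarrow> nat \<Rightarrow> KK tmat set" where
  "HeckeGens kk ll n N = {T0m kk ll n N} \<union> {Tm kk ll a | a. 1 \<le> a \<and> a \<le> n - 1}"

text \<open>Operators on V as matrices: f r c = coefficient of u_r in f(u_c).\<close>
type_synonym 'k vmat = "nat \<Rightarrow> nat \<Rightarrow> 'k"

text \<open>Tensor product of a list of homogeneous operators (operator, parity) with the
 Koszul sign: (phi_1 \<otimes> ... \<otimes> phi_n)(x_1 \<otimes> ... \<otimes> x_n) =
 (-1)^{\<Sum>_{s<t} |x_s| |phi_t|} phi_1(x_1) \<otimes> ... \<otimes> phi_n(x_n).\<close>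
definition tens :: "(nat \<Rightarrow> nat) \<Rightarrow> ('k::field vmat \<times> nat) list \<Rightarrow> 'k tmat" where
  "tens p fs = (\<lambda>r c. (-1) ^ (\<Sum>t<length fs. snd (fs ! t) * (\<Sum>s<t. p (c ! s)))
                        * (\<Prod>t<length fs. fst (fs ! t) (r ! t) (c ! t)))"

definition kd :: "nat \<Rightarrow> nat \<Rightarrow> int" where "kd a b = (if a = b then 1 else 0)"

definition idv :: "'k::field vmat" where "idv = (\<lambda>r c. if r = c then 1 else 0)"

definition Ev :: "(nat \<Rightarrow> nat) \<Rightarrow> nat \<Rightarrow> KK vmat" where
  "Ev p a = (\<lambda>r c. if r = a \<and> c = a + 1 then (-1) ^ p (a + 1) else 0)"

definition Fv :: "(nat \<Rightarrow> nat) \<Rightarrow> nat \<Rightarrow> KK vmat" where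
  "Fv p a = (\<lambda>r c. if r = a + 1 \<and> c = a then (-1) ^ p a else 0)"

definition Kv :: "(nat \<Rightarrow> nat) \<Rightarrow> nat \<Rightarrow> int \<Rightarrow> KK vmat" where
  "Kv p b e = (\<lambda>r c. if r = c then qK powi (e * (-1) ^ p c * kd b c) else 0)"

definition Ktv :: "(nat \<Rightarrow> nat) \<Rightarrow> nat \<Rightarrow> int \<Rightarrow> KK vmat" where
  "Ktv p a e = (\<lambda>r c. if r = c then qK powi (e * (-1) ^ p c * (kd a c - kd (a + 1) c)) else 0)"

definition Epar :: "(nat \<Rightarrow> nat) \<Rightarrow> nat \<Rightarrow> nat" where
  "Epar p a = (p a + p (a + 1)) mod 2"

definition msum :: "nat \<Rightarrow> (nat \<Rightarrow> 'k::field tmat) \<Rightarrow> 'k tmat" where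
  "msum n f = (\<lambda>r c. \<Sum>j<n. f j r c)"

definition PsiE :: "(nat \<Rightarrow> nat) \<Rightarrow> nat \<Rightarrow> nat \<Rightarrow> KK tmat" where
  "PsiE p n a = msum n (\<lambda>j. tens p (replicate j (Ktv p a 1, 0) @ [(Ev p a, Epar p a)]
                                  @ replicate (n - 1 - j) (idv, 0)))"

definition PsiF :: "(nat \<Rightarrow> nat) \<Rightarrow> nat \<Rightarrow> nat \<Rightarrow> KK tmat" where
  "PsiF p n a = msum n (\<lambda>j. tens p (replicate j (idv, 0) @ [(Fv p a, Epar p a)]
                                  @ replicate (n - 1 - j) (Ktv p a (-1), 0)))"

definition PsiK :: "(nat \<Rightarrow> nat) \<Rightarrow> nat \<Rightarrow> nat \<Rightarrow> int \<Rightarrow> KK tmat" where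
  "PsiK p n b e = tens p (replicate n (Kv p b e, 0))"

text \<open>Image under Psi^{\<otimes>n} of the generators K_b^{\<pm>1}, E_a, F_a of U_q(g)\<close>
definition UGens :: "(nat \<Rightarrow> nat) \<Rightarrow> (nat \<Rightarrow> nat) \<Rightarrow> nat \<Rightarrow> nat \<Rightarrow> KK tmat set" where
  "UGens kk ll m n = (let p = par kk ll; N = dd kk ll m in
     {PsiK p n b e | b e. 1 \<le> b \<and> b \<le> N \<and> (e = 1 \<or> e = -1)}
     \<union> {PsiE p n a | a. 1 \<le> a \<and> a \<le> N - 1 \<and> a \<notin> dd kk ll ` {1..m - 1}}
     \<union> {PsiF p n a | a. 1 \<le> a \<and> a \<le> N - 1 \<and> a \<notin> dd kk ll ` {1..m - 1}})"

end

theory Submission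
  imports Defs
begin

(*
  Commutation with a fixed operator is preserved by sums, scalar multiples and products, so it
  suffices to check generators; as T_0 is a product of the T_a^-1, theta and S_0, the Hecke side
  reduces to T_a, S_a (a >= 1) and S_0.  The images of K_b and of S_0 are diagonal: the
  eigenvalue of K_b is invariant under permuting tensor factors, and that of S_0 only sees the
  colour of the first factor, which E_a and F_a do not change because a is not a colour boundary.
  The images of E_a and F_a are sums of hops, each changing a single tensor factor, weighted by
  the factors to its left and to its right, whereas T_a and S_a only touch the factors a and a+1.
  A hop at any other position commutes with them because its weight is symmetric in these two
  factors, and the two hops at positions a, a+1 reduce the claim to the case n = 2, which is a
  finite case distinction.
*)

section \<open>Operators commuting on a basis\<close>

definition commute_on :: "nat list set \<Rightarrow> 'k::field tmat \<Rightarrow> 'k tmat \<Rightarrow> bool" where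
  "commute_on B X Y \<longleftrightarrow> (\<forall>r\<in>B. \<forall>c\<in>B. mmul B X Y r c = mmul B Y X r c)"

definition diag_on :: "nat list set \<Rightarrow> 'k::field tmat \<Rightarrow> (nat list \<Rightarrow> 'k) \<Rightarrow> bool" where
  "diag_on B D d \<longleftrightarrow> (\<forall>r\<in>B. \<forall>c\<in>B. D r c = (if r = c then d c else 0))"

lemma commute_on_sym: "commute_on B X Y \<longleftrightarrow> commute_on B Y X"
  unfolding commute_on_def by auto

lemma mmul_assoc: "mmul B (mmul B X Y) Z r c = mmul B X (mmul B Y Z) r c"
proof -
  have "mmul B (mmul B X Y) Z r c = (\<Sum>s\<in>B. \<Sum>t\<in>B. X r t * Y t s * Z s c)"
    unfolding mmul_def by (simp add: sum_distrib_right)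
  also have "\<dots> = (\<Sum>t\<in>B. \<Sum>s\<in>B. X r t * Y t s * Z s c)"
    by (rule sum.swap)
  also have "\<dots> = mmul B X (mmul B Y Z) r c"
    unfolding mmul_def by (simp add: sum_distrib_left mult.assoc)
  finally show ?thesis .
qed

lemma mmul_cong:
  "(\<And>s. s \<in> B \<Longrightarrow> X r s = X' r s) \<Longrightarrow> (\<And>s. s \<in> B \<Longrightarrow> Y s c = Y' s c) \<Longrightarrow>
   mmul B X Y r c = mmul B X' Y' r c"
  unfolding mmul_def by (rule sum.cong) auto

lemma mmul_diag_left:
  assumes "finite B" and "diag_on B D d" and "r \<in> B"
  shows "mmul B D M r c = d r * M r c"
proof -
  have "mmul B D M r c = (\<Sum>s\<in>B. if s = r then d r * M r c else 0)"
    unfolding mmul_def by (rule sum.cong) (use assms(2,3) in \<open>auto simp: diag_on_def\<close>)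
  with assms(1,3) show ?thesis by simp
qed

lemma mmul_diag_right:
  assumes "finite B" and "diag_on B D d" and "c \<in> B"
  shows "mmul B M D r c = M r c * d c"
proof -
  have "mmul B M D r c = (\<Sum>s\<in>B. if s = c then M r c * d c else 0)"
    unfolding mmul_def by (rule sum.cong) (use assms(2,3) in \<open>auto simp: diag_on_def\<close>)
  with assms(1,3) show ?thesis by simp
qed

lemma diag_on_nonzero: "diag_on B D d \<Longrightarrow> r \<in> B \<Longrightarrow> c \<in> B \<Longrightarrow> D r c \<noteq> 0 \<Longrightarrow> r = c"
  by (auto simp: diag_on_def split: if_splits)

lemma commute_on_diag:
  assumes "finite B" and "diag_on B D d"
    and "\<And>r c. r \<in> B \<Longrightarrow> c \<in> B \<Longrightarrow> M r c \<noteq> 0 \<Longrightarrow> d r = d c"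
  shows "commute_on B D M"
  unfolding commute_on_def
proof (intro ballI)
  fix r c assume "r \<in> B" and "c \<in> B"
  with assms show "mmul B D M r c = mmul B M D r c"
    by (cases "M r c = 0") (auto simp: mmul_diag_left mmul_diag_right mult.commute)
qed

lemma commute_on_idm: "finite B \<Longrightarrow> commute_on B idm Y"
  by (rule commute_on_diag[where d = "\<lambda>_. 1"]) (auto simp: diag_on_def idm_def)

lemma commute_on_add:
  "commute_on B M Y \<Longrightarrow> commute_on B M' Y \<Longrightarrow> commute_on B (\<lambda>r c. M r c + M' r c) Y"
  unfolding commute_on_def mmul_def by (simp add: distrib_left distrib_right sum.distrib)

lemma commute_on_diff:
  "commute_on B M Y \<Longrightarrow> commute_on B M' Y \<Longrightarrow> commute_on B (\<lambda>r c. M r c - M' r c) Y"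
  unfolding commute_on_def mmul_def by (simp add: left_diff_distrib right_diff_distrib sum_subtractf)

lemma commute_on_smult: "commute_on B M Y \<Longrightarrow> commute_on B (\<lambda>r c. x * M r c) Y"
proof -
  have "mmul B (\<lambda>r c. x * M r c) Y r c = x * mmul B M Y r c"
    and "mmul B Y (\<lambda>r c. x * M r c) r c = x * mmul B Y M r c" for r c
    by (simp_all add: mmul_def sum_distrib_left algebra_simps)
  then show "commute_on B M Y \<Longrightarrow> commute_on B (\<lambda>r c. x * M r c) Y"
    by (simp add: commute_on_def)
qed

lemma commute_on_mmul:
  assumes "commute_on B M Y" and "commute_on B M' Y"
  shows "commute_on B (mmul B M M') Y"
  unfolding commute_on_def
proof (intro ballI)
  fix r c assume r: "r \<in> B" and c: "c \<in> B"
  have "mmul B (mmul B M M') Y r c = mmul B M (mmul B M' Y) r c"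
    by (rule mmul_assoc)
  also have "\<dots> = mmul B M (mmul B Y M') r c"
    by (rule mmul_cong) (use assms(2) c in \<open>auto simp: commute_on_def\<close>)
  also have "\<dots> = mmul B (mmul B M Y) M' r c"
    by (rule mmul_assoc[symmetric])
  also have "\<dots> = mmul B (mmul B Y M) M' r c"
    by (rule mmul_cong) (use assms(1) r in \<open>auto simp: commute_on_def\<close>)
  also have "\<dots> = mmul B Y (mmul B M M') r c"
    by (rule mmul_assoc)
  finally show "mmul B (mmul B M M') Y r c = mmul B Y (mmul B M M') r c" .
qed

lemma commute_on_mprod:
  "finite B \<Longrightarrow> (\<And>M. M \<in> set Ms \<Longrightarrow> commute_on B M Y) \<Longrightarrow> commute_on B (mprod B Ms) Y"
  unfolding mprod_def by (induction Ms) (auto intro: commute_on_idm commute_on_mmul)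

lemma commute_on_galg:
  assumes "finite B" and "\<And>g. g \<in> G \<Longrightarrow> commute_on B g Y" and "X \<in> galg B G"
  shows "commute_on B X Y"
  using assms(3)
proof (induction rule: galg.induct)
  case galg_id
  show ?case by (rule commute_on_idm[OF assms(1)])
next
  case (galg_gen M)
  then show ?case by (rule assms(2))
next
  case (galg_add M M')
  from galg_add.IH show ?case by (rule commute_on_add)
next
  case (galg_smult M x)
  from galg_smult.IH show ?case by (rule commute_on_smult)
next
  case (galg_mult M M')
  from galg_mult.IH show ?case by (rule commute_on_mmul)
qed

lemma commute_on_galg_galg:
  assumes "finite B" and "\<And>g u. g \<in> G \<Longrightarrow> u \<in> U \<Longrightarrow> commute_on B g u"
    and "X \<in> galg B G" and "Y \<in> galg B U"
  shows "commute_on B X Y"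
proof (rule commute_on_galg[OF assms(1) _ assms(3)])
  fix g assume "g \<in> G"
  have "commute_on B Y g"
    by (rule commute_on_galg[OF assms(1) _ assms(4)]) (use assms(2) \<open>g \<in> G\<close> commute_on_sym in blast)
  then show "commute_on B g Y" by (simp add: commute_on_sym)
qed

lemma finite_Bas: "finite (Bas n N)"
proof -
  have "Bas n N = {xs. set xs \<subseteq> {1..N} \<and> length xs = n}"
    unfolding Bas_def by auto
  then show ?thesis using finite_lists_length_eq[of "{1..N}" n] by simp
qed

lemma length_Bas: "c \<in> Bas n N \<Longrightarrow> length c = n"
  by (simp add: Bas_def)

lemma Bas_list_update: "c \<in> Bas n N \<Longrightarrow> t \<in> {1..N} \<Longrightarrow> c[j := t] \<in> Bas n N"
  unfolding Bas_def using set_update_subset_insert by fastforce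

lemma swp_Suc: "swp (Suc P) c = c[P := c ! Suc P, Suc P := c ! P]"
  by (simp add: swp_def)

lemma nth_swp:
  "Suc P < length c \<Longrightarrow>
   swp (Suc P) c ! t = (if t = P then c ! Suc P else if t = Suc P then c ! P else c ! t)"
  by (simp add: swp_Suc nth_list_update)

lemma Bas_swp:
  assumes "c \<in> Bas n N" and "Suc P < n"
  shows "swp (Suc P) c \<in> Bas n N"
  using assms by (simp add: swp_Suc Bas_list_update Bas_def subset_iff)

lemma prod_nth_swp:
  assumes "P \<in> S \<longleftrightarrow> Suc P \<in> S" and "Suc P < length c"
  shows "(\<Prod>t\<in>S. g (swp (Suc P) c ! t)) = (\<Prod>t\<in>S. g (c ! t))"
proof -
  define \<sigma> where "\<sigma> t = (if t = P then Suc P else if t = Suc P then P else t)" for t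
  have "(\<Prod>t\<in>S. g (c ! t)) = (\<Prod>t\<in>S. g (c ! \<sigma> t))"
    by (rule prod.reindex_bij_witness[of S \<sigma> \<sigma>]) (use assms(1) in \<open>auto simp: \<sigma>_def\<close>)
  also have "\<dots> = (\<Prod>t\<in>S. g (swp (Suc P) c ! t))"
    using assms(2) by (intro prod.cong) (auto simp: nth_swp \<sigma>_def)
  finally show ?thesis by simp
qed

lemma pair_update_pair_update: "c[P := u, Suc P := v, P := u', Suc P := v'] = c[P := u', Suc P := v']"
  by (simp add: list_update_swap[of "Suc P" P])

lemma swp_pair_update:
  "Suc P < length c \<Longrightarrow> swp (Suc P) (c[P := u, Suc P := v]) = c[P := v, Suc P := u]"
  by (simp add: swp_Suc nth_list_update pair_update_pair_update)

lemma swp_list_update: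
  "j \<noteq> P \<Longrightarrow> j \<noteq> Suc P \<Longrightarrow> swp (Suc P) (c[j := t]) = (swp (Suc P) c)[j := t]"
  by (simp add: swp_Suc list_update_swap)

section \<open>Hopping operators and two-site operators\<close>

definition hop_coef :: "(nat \<Rightarrow> 'k::field) \<Rightarrow> (nat \<Rightarrow> 'k) \<Rightarrow> nat \<Rightarrow> nat \<Rightarrow> nat list \<Rightarrow> 'k" where
  "hop_coef wl wr n j c = (\<Prod>t<j. wl (c ! t)) * (\<Prod>t\<in>{Suc j..<n}. wr (c ! t))"

text \<open>The shape of the images of E_a and F_a: a basis tuple is mapped to the sum over all its
  entries equal to src of the tuple with that entry replaced by tgt, weighted by \<kappa> and by wl on
  every entry to its left (Koszul sign and K-factors) and wr on every entry to its right.\<close>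

definition hopping ::
  "nat list set \<Rightarrow> nat \<Rightarrow> nat \<Rightarrow> nat \<Rightarrow> 'k::field \<Rightarrow> (nat \<Rightarrow> 'k) \<Rightarrow> (nat \<Rightarrow> 'k) \<Rightarrow> 'k tmat \<Rightarrow> bool" where
  "hopping B n src tgt \<kappa> wl wr Y \<longleftrightarrow> (\<forall>r\<in>B. \<forall>c\<in>B.
     Y r c = (\<Sum>j<n. if c ! j = src \<and> r = c[j := tgt] then \<kappa> * hop_coef wl wr n j c else 0))"

lemma hopping_nonzero:
  assumes "hopping B n src tgt \<kappa> wl wr Y" and "r \<in> B" and "c \<in> B" and "Y r c \<noteq> 0"
  shows "\<exists>j<n. c ! j = src \<and> r = c[j := tgt]"
proof (rule ccontr)
  assume "\<not> ?thesis"
  then have "Y r c = 0"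
    using assms(1-3) by (auto simp: hopping_def intro!: sum.neutral)
  with assms(4) show False by contradiction
qed

lemma hop_coef_swp:
  assumes "j \<noteq> P" and "j \<noteq> Suc P" and "Suc P < n" and "length c = n"
  shows "hop_coef wl wr n j (swp (Suc P) c) = hop_coef wl wr n j c"
proof -
  have "P \<in> {..<j} \<longleftrightarrow> Suc P \<in> {..<j}" and "P \<in> {Suc j..<n} \<longleftrightarrow> Suc P \<in> {Suc j..<n}"
    using assms(1-3) by auto
  with assms(3,4) show ?thesis
    unfolding hop_coef_def by (simp add: prod_nth_swp)
qed

definition hop_coef_off_pair ::
  "(nat \<Rightarrow> 'k::field) \<Rightarrow> (nat \<Rightarrow> 'k) \<Rightarrow> nat \<Rightarrow> nat \<Rightarrow> nat list \<Rightarrow> 'k" where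
  "hop_coef_off_pair wl wr n P c = (\<Prod>t<P. wl (c ! t)) * (\<Prod>t\<in>{Suc (Suc P)..<n}. wr (c ! t))"

lemma hop_coef_at_pair:
  assumes "Suc P < n"
  shows "hop_coef wl wr n P c = hop_coef_off_pair wl wr n P c * wr (c ! Suc P)"
    and "hop_coef wl wr n (Suc P) c = hop_coef_off_pair wl wr n P c * wl (c ! P)"
  using assms unfolding hop_coef_def hop_coef_off_pair_def
  by (simp_all add: prod.atLeast_Suc_lessThan algebra_simps)

lemma hop_coef_off_pair_update:
  "hop_coef_off_pair wl wr n P (c[P := u, Suc P := v]) = hop_coef_off_pair wl wr n P c"
  unfolding hop_coef_off_pair_def by (intro arg_cong2[where f = "(*)"] prod.cong) auto

definition two_site ::
  "nat list set \<Rightarrow> nat \<Rightarrow> (nat \<Rightarrow> nat \<Rightarrow> 'k::field) \<Rightarrow> (nat \<Rightarrow> nat \<Rightarrow> 'k) \<Rightarrow> 'k tmat \<Rightarrow> bool" where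
  "two_site B P al be X \<longleftrightarrow> (\<forall>r\<in>B. \<forall>c\<in>B.
     X r c = al (c ! P) (c ! Suc P) * (if r = c then 1 else 0)
           + be (c ! P) (c ! Suc P) * (if r = swp (Suc P) c then 1 else 0))"

lemma two_site_nonzero:
  "two_site B P al be X \<Longrightarrow> r \<in> B \<Longrightarrow> c \<in> B \<Longrightarrow> X r c \<noteq> 0 \<Longrightarrow> r = c \<or> r = swp (Suc P) c"
  by (auto simp: two_site_def split: if_splits)

text \<open>The restrictions of a two-site operator and of a hopping operator to the factors P, Suc P,
  i.e. operators on V \<otimes> V, written in transposed form: they act on a functional \<phi> on pairs of
  indices, evaluated at the basis vector u_x \<otimes> u_y.  Quantifying over all \<phi>, pair_commute is
  then the commutation of these two operators.\<close>

definition pair_op ::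
  "(nat \<Rightarrow> nat \<Rightarrow> 'k::field) \<Rightarrow> (nat \<Rightarrow> nat \<Rightarrow> 'k) \<Rightarrow> (nat \<Rightarrow> nat \<Rightarrow> 'k) \<Rightarrow> nat \<Rightarrow> nat \<Rightarrow> 'k" where
  "pair_op al be \<phi> x y = al x y * \<phi> x y + be x y * \<phi> y x"

definition pair_hop ::
  "nat \<Rightarrow> nat \<Rightarrow> (nat \<Rightarrow> 'k::field) \<Rightarrow> (nat \<Rightarrow> 'k) \<Rightarrow> (nat \<Rightarrow> nat \<Rightarrow> 'k) \<Rightarrow> nat \<Rightarrow> nat \<Rightarrow> 'k" where
  "pair_hop src tgt wl wr \<phi> x y =
     (if x = src then wr y * \<phi> tgt y else 0) + (if y = src then wl x * \<phi> x tgt else 0)"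

definition pair_commute ::
  "(nat \<Rightarrow> nat \<Rightarrow> 'k::field) \<Rightarrow> (nat \<Rightarrow> nat \<Rightarrow> 'k) \<Rightarrow> nat \<Rightarrow> nat \<Rightarrow> (nat \<Rightarrow> 'k) \<Rightarrow> (nat \<Rightarrow> 'k) \<Rightarrow> bool" where
  "pair_commute al be src tgt wl wr \<longleftrightarrow> (\<forall>\<phi> x y.
     pair_hop src tgt wl wr (pair_op al be \<phi>) x y = pair_op al be (pair_hop src tgt wl wr \<phi>) x y)"

lemma two_site_at_pair_update:
  assumes "two_site B P al be X" and "r \<in> B" and "c[P := u, Suc P := v] \<in> B" and "Suc P < length c"
  shows "X r (c[P := u, Suc P := v]) =
           pair_op al be (\<lambda>s t. if r = c[P := s, Suc P := t] then 1 else 0) u v"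
  using assms by (simp add: two_site_def pair_op_def swp_pair_update)

lemma mmul_hopping_right:
  assumes "hopping (Bas n N) n src tgt \<kappa> wl wr Y" and "c \<in> Bas n N" and "tgt \<in> {1..N}"
  shows "mmul (Bas n N) X Y r c =
           (\<Sum>j<n. if c ! j = src then \<kappa> * hop_coef wl wr n j c * X r (c[j := tgt]) else 0)"
proof -
  let ?B = "Bas n N"
  have "mmul ?B X Y r c =
          (\<Sum>s\<in>?B. \<Sum>j<n. X r s * (if c ! j = src \<and> s = c[j := tgt] then \<kappa> * hop_coef wl wr n j c else 0))"
    unfolding mmul_def using assms(1,2) by (intro sum.cong) (auto simp: hopping_def sum_distrib_left)
  also have "\<dots> = (\<Sum>j<n. \<Sum>s\<in>?B. X r s * (if c ! j = src \<and> s = c[j := tgt] then \<kappa> * hop_coef wl wr n j c else 0))"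
    by (rule sum.swap)
  also have "\<dots> = (\<Sum>j<n. if c ! j = src then \<kappa> * hop_coef wl wr n j c * X r (c[j := tgt]) else 0)"
    using finite_Bas Bas_list_update[OF assms(2,3)]
    by (intro sum.cong) (auto simp: if_distrib[of "(*) _"] mult.commute cong: if_cong)
  finally show ?thesis .
qed

lemma mmul_two_site_right:
  assumes "two_site (Bas n N) P al be X" and "c \<in> Bas n N" and "Suc P < n"
  shows "mmul (Bas n N) Y X r c =
           al (c ! P) (c ! Suc P) * Y r c + be (c ! P) (c ! Suc P) * Y r (swp (Suc P) c)"
proof -
  let ?B = "Bas n N" and ?x = "c ! P" and ?y = "c ! Suc P" and ?sc = "swp (Suc P) c"
  have "mmul ?B Y X r c =
          (\<Sum>s\<in>?B. (if s = c then al ?x ?y * Y r s else 0) + (if s = ?sc then be ?x ?y * Y r s else 0))"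
    unfolding mmul_def using assms(1,2) by (intro sum.cong) (auto simp: two_site_def algebra_simps)
  also have "\<dots> = al ?x ?y * Y r c + be ?x ?y * Y r ?sc"
    using finite_Bas assms(2) Bas_swp[OF assms(2,3)] by (simp add: sum.distrib)
  finally show ?thesis .
qed

lemma sum_lessThan_pair:
  fixes f :: "nat \<Rightarrow> 'a::comm_monoid_add"
  assumes "Suc P < n"
  shows "(\<Sum>j<n. f j) = f P + f (Suc P) + (\<Sum>j\<in>{..<n} - {P, Suc P}. f j)"
  using assms by (simp add: sum.subset_diff[of "{P, Suc P}" "{..<n}"] add_ac)

lemma hopping_terms_at_pair:
  fixes wl wr :: "nat \<Rightarrow> 'k::field"
  assumes "Suc P < n" and "length d = n"
  shows "(if d ! P = src \<and> r = d[P := tgt] then \<kappa> * hop_coef wl wr n P d else 0)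
       + (if d ! Suc P = src \<and> r = d[Suc P := tgt] then \<kappa> * hop_coef wl wr n (Suc P) d else 0)
       = \<kappa> * hop_coef_off_pair wl wr n P d *
         pair_hop src tgt wl wr (\<lambda>u v. if r = d[P := u, Suc P := v] then 1 else 0) (d ! P) (d ! Suc P)"
proof -
  define \<phi> where "\<phi> = (\<lambda>u v. if r = d[P := u, Suc P := v] then 1 else (0::'k))"
  have "d[P := tgt, Suc P := d ! Suc P] = d[P := tgt]"
    by (subst list_update_swap) simp_all
  then have \<phi>_at_P: "\<phi> tgt (d ! Suc P) = (if r = d[P := tgt] then 1 else 0)"
    and \<phi>_at_Suc_P: "\<phi> (d ! P) tgt = (if r = d[Suc P := tgt] then 1 else 0)"
    by (simp_all add: \<phi>_def)
  have "(if d ! P = src \<and> r = d[P := tgt] then \<kappa> * hop_coef wl wr n P d else 0)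
       + (if d ! Suc P = src \<and> r = d[Suc P := tgt] then \<kappa> * hop_coef wl wr n (Suc P) d else 0)
       = \<kappa> * hop_coef_off_pair wl wr n P d * pair_hop src tgt wl wr \<phi> (d ! P) (d ! Suc P)"
    unfolding pair_hop_def hop_coef_at_pair[OF assms(1)] \<phi>_at_P \<phi>_at_Suc_P
    by (simp add: algebra_simps)
  then show ?thesis by (simp only: \<phi>_def)
qed

lemma hopping_terms_at_pair_swp:
  fixes wl wr :: "nat \<Rightarrow> 'k::field"
  assumes "Suc P < n" and "length c = n"
  shows "(if swp (Suc P) c ! P = src \<and> r = (swp (Suc P) c)[P := tgt]
          then \<kappa> * hop_coef wl wr n P (swp (Suc P) c) else 0)
       + (if swp (Suc P) c ! Suc P = src \<and> r = (swp (Suc P) c)[Suc P := tgt]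
          then \<kappa> * hop_coef wl wr n (Suc P) (swp (Suc P) c) else 0)
       = \<kappa> * hop_coef_off_pair wl wr n P c *
         pair_hop src tgt wl wr (\<lambda>u v. if r = c[P := u, Suc P := v] then 1 else 0) (c ! Suc P) (c ! P)"
proof -
  have "(swp (Suc P) c)[P := u, Suc P := v] = c[P := u, Suc P := v]" for u v
    by (simp add: swp_Suc pair_update_pair_update)
  moreover have "swp (Suc P) c ! P = c ! Suc P" and "swp (Suc P) c ! Suc P = c ! P"
    using assms by (simp_all add: nth_swp)
  moreover have "hop_coef_off_pair wl wr n P (swp (Suc P) c) = hop_coef_off_pair wl wr n P c"
    by (simp add: swp_Suc hop_coef_off_pair_update)
  moreover have "length (swp (Suc P) c) = n"
    using assms(2) by (simp add: swp_def)
  ultimately show ?thesis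
    using hopping_terms_at_pair[OF assms(1), of "swp (Suc P) c" src r tgt \<kappa> wl wr] by simp
qed

lemma two_site_terms_at_pair:
  fixes X :: "'k::field tmat"
  assumes X: "two_site (Bas n N) P al be X" and r: "r \<in> Bas n N" and c: "c \<in> Bas n N"
    and tgt: "tgt \<in> {1..N}" and P: "Suc P < n"
  shows "(if c ! P = src then \<kappa> * hop_coef wl wr n P c * X r (c[P := tgt]) else 0)
       + (if c ! Suc P = src then \<kappa> * hop_coef wl wr n (Suc P) c * X r (c[Suc P := tgt]) else 0)
       = \<kappa> * hop_coef_off_pair wl wr n P c * pair_hop src tgt wl wr
           (pair_op al be (\<lambda>u v. if r = c[P := u, Suc P := v] then 1 else 0)) (c ! P) (c ! Suc P)"
proof -
  define \<phi> where "\<phi> = (\<lambda>u v. if r = c[P := u, Suc P := v] then 1 else (0::'k))"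
  have X_pair: "X r (c[P := u, Suc P := v]) = pair_op al be \<phi> u v"
    if "c[P := u, Suc P := v] \<in> Bas n N" for u v
    using two_site_at_pair_update[OF X r that] P length_Bas[OF c] unfolding \<phi>_def by simp
  have "c[P := tgt, Suc P := c ! Suc P] = c[P := tgt]"
    by (subst list_update_swap) simp_all
  moreover have "c[P := c ! P, Suc P := tgt] = c[Suc P := tgt]"
    by simp
  ultimately have "X r (c[P := tgt]) = pair_op al be \<phi> tgt (c ! Suc P)"
    and "X r (c[Suc P := tgt]) = pair_op al be \<phi> (c ! P) tgt"
    using X_pair[of tgt "c ! Suc P"] X_pair[of "c ! P" tgt] Bas_list_update[OF c tgt] by simp_all
  then show ?thesis
    unfolding \<phi>_def[symmetric]
    by (simp add: pair_hop_def hop_coef_at_pair[OF P] algebra_simps)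
qed

lemma commute_on_two_site_hopping:
  fixes X Y :: "'k::field tmat"
  assumes P: "Suc P < n" and X: "two_site (Bas n N) P al be X"
    and Y: "hopping (Bas n N) n src tgt \<kappa> wl wr Y" and tgt: "tgt \<in> {1..N}"
    and pair: "pair_commute al be src tgt wl wr"
  shows "commute_on (Bas n N) X Y"
  unfolding commute_on_def
proof (intro ballI)
  let ?B = "Bas n N"
  fix r c assume r: "r \<in> ?B" and c: "c \<in> ?B"
  have lc: "length c = n" using c by (rule length_Bas)
  define x y sc where "x = c ! P" and "y = c ! Suc P" and "sc = swp (Suc P) c"
  define \<phi> where "\<phi> = (\<lambda>u v. if r = c[P := u, Suc P := v] then 1 else (0::'k))"
  define Z where "Z = \<kappa> * hop_coef_off_pair wl wr n P c"
  define H where "H d j = (if d ! j = src \<and> r = d[j := tgt] then \<kappa> * hop_coef wl wr n j d else 0)" for d j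
  define F where "F j = (if c ! j = src then \<kappa> * hop_coef wl wr n j c * X r (c[j := tgt]) else 0)" for j
  define G where "G j = al x y * H c j + be x y * H sc j" for j
  have sc: "sc \<in> ?B" unfolding sc_def by (rule Bas_swp[OF c P])
  have Y_eq: "Y r d = (\<Sum>j<n. H d j)" if "d \<in> ?B" for d
    using Y r that by (simp add: hopping_def H_def)
  have XY: "mmul ?B X Y r c = (\<Sum>j<n. F j)"
    unfolding F_def by (rule mmul_hopping_right[OF Y c tgt])
  have YX: "mmul ?B Y X r c = (\<Sum>j<n. G j)"
    unfolding mmul_two_site_right[OF X c P] G_def sum.distrib
    using Y_eq[OF c] Y_eq[OF sc] by (simp add: x_def y_def sc_def sum_distrib_left)
  txt \<open>A hop at a position j other than P, Suc P commutes with X, since its weight is symmetric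
    in the entries at P and Suc P.\<close>
  have off_pair: "F j = G j" if "j \<in> {..<n} - {P, Suc P}" for j
  proof -
    have j: "j \<noteq> P" "j \<noteq> Suc P" using that by auto
    have "c[j := tgt] \<in> ?B" by (rule Bas_list_update[OF c tgt])
    then have "X r (c[j := tgt]) = al x y * (if r = c[j := tgt] then 1 else 0)
                                + be x y * (if r = sc[j := tgt] then 1 else 0)"
      using X r j by (simp add: two_site_def x_def y_def sc_def swp_list_update)
    moreover have "sc ! j = c ! j" using j lc P by (simp add: sc_def nth_swp)
    moreover have "hop_coef wl wr n j sc = hop_coef wl wr n j c"
      unfolding sc_def by (rule hop_coef_swp[OF j P lc])
    ultimately show ?thesis by (simp add: F_def G_def H_def algebra_simps)
  qed
  have H_c: "H c P + H c (Suc P) = Z * pair_hop src tgt wl wr \<phi> x y"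
    unfolding H_def Z_def \<phi>_def x_def y_def by (rule hopping_terms_at_pair[OF P lc])
  have H_sc: "H sc P + H sc (Suc P) = Z * pair_hop src tgt wl wr \<phi> y x"
    unfolding H_def Z_def \<phi>_def x_def y_def sc_def by (rule hopping_terms_at_pair_swp[OF P lc])
  have "G P + G (Suc P) = al x y * (H c P + H c (Suc P)) + be x y * (H sc P + H sc (Suc P))"
    by (simp add: G_def algebra_simps)
  also have "\<dots> = Z * pair_op al be (pair_hop src tgt wl wr \<phi>) x y"
    unfolding H_c H_sc by (simp add: pair_op_def algebra_simps)
  also have "\<dots> = Z * pair_hop src tgt wl wr (pair_op al be \<phi>) x y"
    using pair by (simp add: pair_commute_def)
  also have "\<dots> = F P + F (Suc P)"
    unfolding F_def Z_def \<phi>_def x_def y_def by (rule two_site_terms_at_pair[OF X r c tgt P, symmetric])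
  finally have "(\<Sum>j<n. F j) = (\<Sum>j<n. G j)"
    unfolding sum_lessThan_pair[OF P] using off_pair by simp
  then show "mmul ?B X Y r c = mmul ?B Y X r c" using XY YX by simp
qed

section \<open>The action of the quantum superalgebra\<close>

lemma prod_lessThan_split:
  fixes g :: "nat \<Rightarrow> 'a::comm_monoid_mult"
  assumes "j < n"
  shows "(\<Prod>t<n. g t) = (\<Prod>t<j. g t) * g j * (\<Prod>t\<in>{Suc j..<n}. g t)"
proof -
  have "(\<Prod>t<n. g t) = (\<Prod>t\<in>{0..<j}. g t) * (\<Prod>t\<in>{j..<n}. g t)"
    using assms by (simp add: lessThan_atLeast0 prod.atLeastLessThan_concat)
  also have "(\<Prod>t\<in>{j..<n}. g t) = g j * (\<Prod>t\<in>{Suc j..<n}. g t)"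
    using assms by (simp add: prod.atLeast_Suc_lessThan)
  finally show ?thesis by (simp add: lessThan_atLeast0 mult.assoc)
qed

lemma tens_single_site:
  fixes fl f fr :: "'k::field vmat"
  assumes j: "j < n" and lr: "length r = n" and lc: "length c = n"
    and fl: "\<And>x y. fl x y = (if x = y then wl y else 0)"
    and fr: "\<And>x y. fr x y = (if x = y then wr y else 0)"
  shows "tens p (replicate j (fl, 0) @ [(f, e)] @ replicate (n - 1 - j) (fr, 0)) r c =
    (if r = c[j := r ! j] then f (r ! j) (c ! j) * hop_coef (\<lambda>x. (-1) ^ (e * p x) * wl x) wr n j c
     else 0)"
proof -
  define fs where "fs = replicate j (fl, 0) @ [(f, e)] @ replicate (n - 1 - j) (fr, 0::nat)"
  have nth_fs: "fs ! t = (if t < j then (fl, 0) else if t = j then (f, e) else (fr, 0))" if "t < n" for t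
    using that j by (auto simp: fs_def nth_append nth_Cons')
  define g where "g t = fst (fs ! t) (r ! t) (c ! t)" for t
  have "(\<Sum>t<n. snd (fs ! t) * (\<Sum>s<t. p (c ! s))) = (\<Sum>t<n. if t = j then e * (\<Sum>s<j. p (c ! s)) else 0)"
    by (rule sum.cong) (auto simp: nth_fs)
  moreover have "length fs = n"
    using j by (simp add: fs_def)
  ultimately have "tens p fs r c = (-1) ^ (e * (\<Sum>s<j. p (c ! s))) * (\<Prod>t<n. g t)"
    using j unfolding tens_def g_def by simp
  also have "\<dots> = (\<Prod>t<j. (-1) ^ (e * p (c ! t))) * ((\<Prod>t<j. g t) * g j * (\<Prod>t\<in>{Suc j..<n}. g t))"
    by (simp add: prod_lessThan_split[OF j] power_mult power_sum)
  also have "\<dots> = (if r = c[j := r ! j] then f (r ! j) (c ! j) * hop_coef (\<lambda>x. (-1) ^ (e * p x) * wl x) wr n j c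
                   else 0)"
  proof (cases "r = c[j := r ! j]")
    case True
    then have agree: "r ! t = c ! t" if "t \<noteq> j" for t
      using that by (metis nth_list_update_neq)
    have "(\<Prod>t<j. g t) = (\<Prod>t<j. wl (c ! t))" and "(\<Prod>t\<in>{Suc j..<n}. g t) = (\<Prod>t\<in>{Suc j..<n}. wr (c ! t))"
      using j by (auto intro!: prod.cong simp: g_def nth_fs fl fr agree)
    moreover have "g j = f (r ! j) (c ! j)"
      using j by (simp add: g_def nth_fs)
    ultimately show ?thesis
      using True by (simp add: hop_coef_def prod.distrib algebra_simps)
  next
    case False
    then obtain t where t: "t < n" "t \<noteq> j" "r ! t \<noteq> c ! t"
      using lr lc by (metis length_list_update nth_equalityI nth_list_update_eq nth_list_update_neq)
    then have "g t = 0" by (auto simp: g_def nth_fs fl fr)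
    then have "(\<Prod>t<j. g t) * g j * (\<Prod>t\<in>{Suc j..<n}. g t) = 0"
      using t by (auto simp flip: prod_lessThan_split[OF j])
    with False show ?thesis by simp
  qed
  finally show ?thesis by (simp only: fs_def)
qed

definition Kt_weight :: "'k::field \<Rightarrow> (nat \<Rightarrow> nat) \<Rightarrow> nat \<Rightarrow> int \<Rightarrow> nat \<Rightarrow> 'k" where
  "Kt_weight q p a e x = q powi (e * (-1) ^ p x * (kd a x - kd (a + 1) x))"

lemma PsiE_hopping:
  "hopping (Bas n N) n (a + 1) a ((-1) ^ p (a + 1))
     (\<lambda>x. (-1) ^ (Epar p a * p x) * Kt_weight qK p a 1 x) (\<lambda>_. 1) (PsiE p n a)"
  unfolding hopping_def
proof (intro ballI)
  fix r c assume "r \<in> Bas n N" and "c \<in> Bas n N"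
  then have lr: "length r = n" and lc: "length c = n" by (simp_all add: length_Bas)
  show "PsiE p n a r c = (\<Sum>j<n. if c ! j = a + 1 \<and> r = c[j := a]
      then (-1) ^ p (a + 1) * hop_coef (\<lambda>x. (-1) ^ (Epar p a * p x) * Kt_weight qK p a 1 x) (\<lambda>_. 1) n j c
      else 0)"
    unfolding PsiE_def msum_def
  proof (rule sum.cong[OF refl])
    fix j assume "j \<in> {..<n}"
    then have j: "j < n" by simp
    then show "tens p (replicate j (Ktv p a 1, 0) @ [(Ev p a, Epar p a)] @ replicate (n - 1 - j) (idv, 0)) r c
      = (if c ! j = a + 1 \<and> r = c[j := a]
         then (-1) ^ p (a + 1) * hop_coef (\<lambda>x. (-1) ^ (Epar p a * p x) * Kt_weight qK p a 1 x) (\<lambda>_. 1) n j c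
         else 0)"
      using lc by (subst tens_single_site[OF j lr lc, where wl = "Kt_weight qK p a 1" and wr = "\<lambda>_. 1"])
        (auto simp: Ktv_def Kt_weight_def idv_def Ev_def)
  qed
qed

lemma PsiF_hopping:
  "hopping (Bas n N) n a (a + 1) ((-1) ^ p a)
     (\<lambda>x. (-1) ^ (Epar p a * p x)) (Kt_weight qK p a (-1)) (PsiF p n a)"
  unfolding hopping_def
proof (intro ballI)
  fix r c assume "r \<in> Bas n N" and "c \<in> Bas n N"
  then have lr: "length r = n" and lc: "length c = n" by (simp_all add: length_Bas)
  show "PsiF p n a r c = (\<Sum>j<n. if c ! j = a \<and> r = c[j := a + 1]
      then (-1) ^ p a * hop_coef (\<lambda>x. (-1) ^ (Epar p a * p x)) (Kt_weight qK p a (-1)) n j c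
      else 0)"
    unfolding PsiF_def msum_def
  proof (rule sum.cong[OF refl])
    fix j assume "j \<in> {..<n}"
    then have j: "j < n" by simp
    then show "tens p (replicate j (idv, 0) @ [(Fv p a, Epar p a)] @ replicate (n - 1 - j) (Ktv p a (-1), 0)) r c
      = (if c ! j = a \<and> r = c[j := a + 1]
         then (-1) ^ p a * hop_coef (\<lambda>x. (-1) ^ (Epar p a * p x)) (Kt_weight qK p a (-1)) n j c
         else 0)"
      using lc by (subst tens_single_site[OF j lr lc, where wl = "\<lambda>_. 1" and wr = "Kt_weight qK p a (-1)"])
        (auto simp: Ktv_def Kt_weight_def idv_def Fv_def)
  qed
qed

lemma PsiK_diag: "diag_on (Bas n N) (PsiK p n b e) (\<lambda>c. \<Prod>t<n. Kv p b e (c ! t) (c ! t))"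
  unfolding diag_on_def
proof (intro ballI)
  fix r c assume "r \<in> Bas n N" and "c \<in> Bas n N"
  then have lr: "length r = n" and lc: "length c = n" by (simp_all add: length_Bas)
  have "PsiK p n b e r c = (\<Prod>t<n. Kv p b e (r ! t) (c ! t))"
    unfolding PsiK_def tens_def by simp
  moreover have "(\<Prod>t<n. Kv p b e (r ! t) (c ! t)) = 0" if "r \<noteq> c"
  proof -
    obtain t where "t < n" and "r ! t \<noteq> c ! t"
      using \<open>r \<noteq> c\<close> lr lc by (auto simp: list_eq_iff_nth_eq)
    then show ?thesis by (auto simp: Kv_def intro: prod_zero)
  qed
  ultimately show "PsiK p n b e r c = (if r = c then \<Prod>t<n. Kv p b e (c ! t) (c ! t) else 0)"
    by auto
qed

section \<open>The action of the Hecke algebra\<close>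

text \<open>Characteristic 0 is needed for the division by 2 in the diagonal coefficient of T_a.\<close>

instance fract :: ("{idom, ring_char_0}") field_char_0
proof
  show "inj (of_nat :: nat \<Rightarrow> 'a fract)"
  proof (rule injI)
    fix m n :: nat
    assume "(of_nat m :: 'a fract) = of_nat n"
    then have "Fract (of_nat m :: 'a) 1 = Fract (of_nat n) 1" by (simp add: of_nat_fract)
    then show "m = n" by (simp add: eq_fract)
  qed
qed

lemma qK_nonzero: "qK \<noteq> 0"
  unfolding qK_def var_def Zero_fract_def
  by (simp add: eq_fract) (metis lookup_single_eq lookup_zero zero_neq_one)

lemma par_le_1: "par kk ll z \<le> 1"
  unfolding par_def Let_def by simp

text \<open>The coefficients of u_x \<otimes> u_y and of u_y \<otimes> u_x in S_a(u_x \<otimes> u_y): S_a acts as T_a on factors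
  of equal colour cl and as the signed flip s_a otherwise; T_a itself is the case of a constant
  colouring.\<close>

definition hecke_stay :: "(nat \<Rightarrow> nat) \<Rightarrow> 'k::field \<Rightarrow> (nat \<Rightarrow> nat) \<Rightarrow> nat \<Rightarrow> nat \<Rightarrow> 'k" where
  "hecke_stay cl q p x y =
     (if cl x \<noteq> cl y \<or> y < x then 0 else if x < y then q - inverse q
      else ((q - inverse q) + (-1) ^ p x * (q + inverse q)) / 2)"

definition hecke_swap :: "(nat \<Rightarrow> nat) \<Rightarrow> nat \<Rightarrow> nat \<Rightarrow> 'k::field" where
  "hecke_swap p x y = (if x = y then 0 else (-1) ^ (p x * p y))"

lemma Tm_two_site:
  "two_site (Bas n N) P (hecke_stay (\<lambda>_. 0) qK (par kk ll)) (hecke_swap (par kk ll)) (Tm kk ll (Suc P))"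
  unfolding two_site_def Tm_def from_img_def Tact_def unitv_def hecke_stay_def hecke_swap_def
  by (auto simp: Let_def)

lemma Sm_two_site:
  "two_site (Bas n N) P (hecke_stay (col kk ll) qK (par kk ll)) (hecke_swap (par kk ll)) (Sm kk ll (Suc P))"
  unfolding two_site_def Sm_def from_img_def Tact_def sact_def unitv_def hecke_stay_def hecke_swap_def
  by (auto simp: Let_def)

lemma S0m_diag: "diag_on B (S0m kk ll) (\<lambda>c. QK (col kk ll (c ! 0)))"
  unfolding diag_on_def S0m_def from_img_def unitv_def by simp

lemma pair_commute_raising:
  fixes q :: "'k::field_char_0"
  assumes "q \<noteq> 0" and "\<And>z. p z \<le> 1" and "cl (a + 1) = cl a"
  shows "pair_commute (hecke_stay cl q p) (hecke_swap p) (a + 1) a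
           (\<lambda>x. (-1) ^ (Epar p a * p x) * Kt_weight q p a 1 x) (\<lambda>_. 1)"
proof -
  have p01: "p z = 0 \<or> p z = 1" for z using assms(2)[of z] by auto
  show ?thesis
    unfolding pair_commute_def pair_hop_def pair_op_def
    apply (intro allI)
    subgoal for \<phi> x y
      using p01[of a] p01[of "a + 1"] p01[of x] p01[of y] assms(1,3)
      by (cases "x = a + 1"; cases "y = a + 1"; cases "x = a"; cases "y = a";
          cases "cl x = cl a"; cases "cl y = cl a")
        (auto simp: hecke_stay_def hecke_swap_def Kt_weight_def kd_def Epar_def field_simps)
    done
qed

lemma pair_commute_lowering:
  fixes q :: "'k::field_char_0"
  assumes "q \<noteq> 0" and "\<And>z. p z \<le> 1" and "cl a = cl (a + 1)"
  shows "pair_commute (hecke_stay cl q p) (hecke_swap p) a (a + 1)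
           (\<lambda>x. (-1) ^ (Epar p a * p x)) (Kt_weight q p a (-1))"
proof -
  have p01: "p z = 0 \<or> p z = 1" for z using assms(2)[of z] by auto
  show ?thesis
    unfolding pair_commute_def pair_hop_def pair_op_def
    apply (intro allI)
    subgoal for \<phi> x y
      using p01[of a] p01[of "a + 1"] p01[of x] p01[of y] assms(1,3)
      by (cases "x = a + 1"; cases "y = a + 1"; cases "x = a"; cases "y = a";
          cases "cl x = cl a"; cases "cl y = cl a")
        (auto simp: hecke_stay_def hecke_swap_def Kt_weight_def kd_def Epar_def field_simps)
    done
qed

lemma commute_on_HeckeGens:
  assumes "\<And>P. Suc P < n \<Longrightarrow> commute_on (Bas n N) (Tm kk ll (Suc P)) Y"
    and "\<And>P. Suc P < n \<Longrightarrow> commute_on (Bas n N) (Sm kk ll (Suc P)) Y"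
    and "commute_on (Bas n N) (S0m kk ll) Y"
    and "X \<in> HeckeGens kk ll n N"
  shows "commute_on (Bas n N) X Y"
proof -
  have T: "commute_on (Bas n N) (Tm kk ll a) Y" if "1 \<le> a" and "a < n" for a
    using assms(1)[of "a - 1"] that by simp
  have S: "commute_on (Bas n N) (Sm kk ll a) Y" if "1 \<le> a" and "a < n" for a
    using assms(2)[of "a - 1"] that by simp
  have Tinv: "commute_on (Bas n N) (Tinvm kk ll a) Y" if "1 \<le> a" and "a < n" for a
    unfolding Tinvm_def
    by (intro commute_on_diff commute_on_smult T that commute_on_idm finite_Bas)
  have theta: "commute_on (Bas n N) (thetam kk ll n N) Y"
    unfolding thetam_def by (rule commute_on_mprod[OF finite_Bas]) (auto intro: S)
  have "commute_on (Bas n N) (T0m kk ll n N) Y"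
    unfolding T0m_def by (rule commute_on_mprod[OF finite_Bas]) (auto intro: Tinv theta assms(3))
  with T show ?thesis
    using assms(4) unfolding HeckeGens_def by auto
qed

lemma commute_on_HeckeGens_PsiK:
  assumes "X \<in> HeckeGens kk ll n N"
  shows "commute_on (Bas n N) X (PsiK (par kk ll) n b e)"
proof (rule commute_on_HeckeGens[OF _ _ _ assms])
  let ?d = "\<lambda>c. \<Prod>t<n. Kv (par kk ll) b e (c ! t) (c ! t)"
  have diag: "diag_on (Bas n N) (PsiK (par kk ll) n b e) ?d"
    by (rule PsiK_diag)
  have swp_invariant: "?d (swp (Suc P) c) = ?d c" if "Suc P < n" and "c \<in> Bas n N" for P c
    using that by (intro prod_nth_swp) (auto simp: length_Bas)
  show "commute_on (Bas n N) (Tm kk ll (Suc P)) (PsiK (par kk ll) n b e)" if "Suc P < n" for P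
    unfolding commute_on_sym[of _ "Tm kk ll (Suc P)"]
  proof (rule commute_on_diag[OF finite_Bas diag])
    fix r c assume r: "r \<in> Bas n N" and c: "c \<in> Bas n N" and "Tm kk ll (Suc P) r c \<noteq> 0"
    then have "r = c \<or> r = swp (Suc P) c" by (rule two_site_nonzero[OF Tm_two_site])
    with swp_invariant[OF that c] show "?d r = ?d c" by auto
  qed
  show "commute_on (Bas n N) (Sm kk ll (Suc P)) (PsiK (par kk ll) n b e)" if "Suc P < n" for P
    unfolding commute_on_sym[of _ "Sm kk ll (Suc P)"]
  proof (rule commute_on_diag[OF finite_Bas diag])
    fix r c assume r: "r \<in> Bas n N" and c: "c \<in> Bas n N" and "Sm kk ll (Suc P) r c \<noteq> 0"
    then have "r = c \<or> r = swp (Suc P) c" by (rule two_site_nonzero[OF Sm_two_site])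
    with swp_invariant[OF that c] show "?d r = ?d c" by auto
  qed
  show "commute_on (Bas n N) (S0m kk ll) (PsiK (par kk ll) n b e)"
  proof (rule commute_on_diag[OF finite_Bas S0m_diag])
    fix r c assume "r \<in> Bas n N" and "c \<in> Bas n N" and "PsiK (par kk ll) n b e r c \<noteq> 0"
    then show "QK (col kk ll (r ! 0)) = QK (col kk ll (c ! 0))"
      using diag_on_nonzero[OF diag] by blast
  qed
qed

lemma commute_on_HeckeGens_hopping:
  assumes Y: "hopping (Bas n N) n src tgt \<kappa> wl wr Y" and tgt: "tgt \<in> {1..N}"
    and same_col: "col kk ll src = col kk ll tgt"
    and pair: "\<And>cl. cl src = cl tgt \<Longrightarrow>
                 pair_commute (hecke_stay cl qK (par kk ll)) (hecke_swap (par kk ll)) src tgt wl wr"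
    and X: "X \<in> HeckeGens kk ll n N"
  shows "commute_on (Bas n N) X Y"
proof (rule commute_on_HeckeGens[OF _ _ _ X])
  show "commute_on (Bas n N) (Tm kk ll (Suc P)) Y" if "Suc P < n" for P
    by (rule commute_on_two_site_hopping[OF that Tm_two_site Y tgt pair]) simp
  show "commute_on (Bas n N) (Sm kk ll (Suc P)) Y" if "Suc P < n" for P
    by (rule commute_on_two_site_hopping[OF that Sm_two_site Y tgt pair[OF same_col]])
  show "commute_on (Bas n N) (S0m kk ll) Y"
  proof (rule commute_on_diag[OF finite_Bas S0m_diag])
    fix r c assume "r \<in> Bas n N" and c: "c \<in> Bas n N" and "Y r c \<noteq> 0"
    then obtain j where "j < n" and "c ! j = src" and "r = c[j := tgt]"
      using hopping_nonzero[OF Y] by blast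
    with same_col length_Bas[OF c] show "QK (col kk ll (r ! 0)) = QK (col kk ll (c ! 0))"
      by (cases j) (auto simp: nth_list_update)
  qed
qed

lemma col_Suc_eq:
  assumes a: "1 \<le> a" and aN: "a + 1 \<le> dd kk ll m" and not_boundary: "a \<notin> dd kk ll ` {1..m - 1}"
  shows "col kk ll (a + 1) = col kk ll a"
proof -
  let ?c = "col kk ll (a + 1)"
  have c: "a + 1 \<le> dd kk ll ?c" unfolding col_def by (rule LeastI[of _ m]) (rule aN)
  have cm: "?c \<le> m" unfolding col_def by (rule Least_le) (rule aN)
  show ?thesis unfolding col_def[of kk ll a]
  proof (rule Least_equality[symmetric])
    show "a \<le> dd kk ll ?c" using c by simp
  next
    fix c' assume c': "a \<le> dd kk ll c'"
    show "?c \<le> c'"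
    proof (rule ccontr)
      assume "\<not> ?c \<le> c'"
      then have lt: "c' < ?c" by simp
      then have "\<not> a + 1 \<le> dd kk ll c'" unfolding col_def by (rule not_less_Least)
      then have eq: "dd kk ll c' = a" using c' by simp
      have "c' \<noteq> 0"
      proof
        assume "c' = 0"
        with eq a show False by (simp add: dd_def)
      qed
      then have "c' \<in> {1..m - 1}" using lt cm by auto
      then show False using not_boundary eq by force
    qed
  qed
qed

lemma commute_on_HeckeGens_UGens:
  assumes X: "X \<in> HeckeGens kk ll n (dd kk ll m)" and Y: "Y \<in> UGens kk ll m n"
  shows "commute_on (Bas n (dd kk ll m)) X Y"
proof -
  let ?p = "par kk ll" and ?N = "dd kk ll m"
  have same_col: "col kk ll (a + 1) = col kk ll a"
    if "1 \<le> a" and "a \<le> ?N - 1" and "a \<notin> dd kk ll ` {1..m - 1}" for a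
    using that by (intro col_Suc_eq) auto
  from Y consider (K) b e where "Y = PsiK ?p n b e"
    | (E) a where "Y = PsiE ?p n a" and "1 \<le> a" and "a \<le> ?N - 1" and "a \<notin> dd kk ll ` {1..m - 1}"
    | (F) a where "Y = PsiF ?p n a" and "1 \<le> a" and "a \<le> ?N - 1" and "a \<notin> dd kk ll ` {1..m - 1}"
    unfolding UGens_def Let_def by blast
  then show ?thesis
  proof cases
    case K
    then show ?thesis using commute_on_HeckeGens_PsiK[OF X] by simp
  next
    case (E a)
    have "a \<in> {1..?N}" and "col kk ll (a + 1) = col kk ll a"
      using E same_col by auto
    moreover have "pair_commute (hecke_stay cl qK ?p) (hecke_swap ?p) (a + 1) a
            (\<lambda>x. (-1) ^ (Epar ?p a * ?p x) * Kt_weight qK ?p a 1 x) (\<lambda>_. 1)"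
      if "cl (a + 1) = cl a" for cl
      using qK_nonzero par_le_1 that by (rule pair_commute_raising)
    ultimately show ?thesis
      unfolding E(1) by (rule commute_on_HeckeGens_hopping[OF PsiE_hopping _ _ _ X])
  next
    case (F a)
    have "a + 1 \<in> {1..?N}" and "col kk ll a = col kk ll (a + 1)"
      using F same_col by auto
    moreover have "pair_commute (hecke_stay cl qK ?p) (hecke_swap ?p) a (a + 1)
            (\<lambda>x. (-1) ^ (Epar ?p a * ?p x)) (Kt_weight qK ?p a (-1))"
      if "cl a = cl (a + 1)" for cl
      using qK_nonzero par_le_1 that by (rule pair_commute_lowering)
    ultimately show ?thesis
      unfolding F(1) by (rule commute_on_HeckeGens_hopping[OF PsiF_hopping _ _ _ X])
  qed
qed

theorem mainTheorem4:
  fixes m n :: nat and kk ll :: "nat \<Rightarrow> nat"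
  assumes "1 \<le> m" and "1 \<le> n" and "0 < dd kk ll m"
  shows "\<forall>X \<in> galg (Bas n (dd kk ll m)) (HeckeGens kk ll n (dd kk ll m)).
         \<forall>Y \<in> galg (Bas n (dd kk ll m)) (UGens kk ll m n).
         \<forall>r \<in> Bas n (dd kk ll m). \<forall>c \<in> Bas n (dd kk ll m).
           mmul (Bas n (dd kk ll m)) X Y r c = mmul (Bas n (dd kk ll m)) Y X r c"
proof (intro ballI)
  fix X Y r c
  assume "X \<in> galg (Bas n (dd kk ll m)) (HeckeGens kk ll n (dd kk ll m))"
    and "Y \<in> galg (Bas n (dd kk ll m)) (UGens kk ll m n)"
  then have "commute_on (Bas n (dd kk ll m)) X Y"
    by (intro commute_on_galg_galg[OF finite_Bas commute_on_HeckeGens_UGens])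
  moreover assume "r \<in> Bas n (dd kk ll m)" and "c \<in> Bas n (dd kk ll m)"
  ultimately show "mmul (Bas n (dd kk ll m)) X Y r c = mmul (Bas n (dd kk ll m)) Y X r c"
    by (simp add: commute_on_def)
qed

end
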